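(* Let $m,k\ge1$, $\mathbf T\in M(m,k)$ and $\sigma$ a permutation of $\mathrm{Range}(\mathbf T)$ such that the $(\mathbf T,\sigma)$-graph is connected. Let $a(\sigma)$ be the number of $q\in\mathrm{Range}(\mathbf T)$ with $\sigma(q)\ne q$. Then \[ km-|\mathbf T|+a(\sigma)\ge m-1+\mathbf 1[\sigma\ne \mathrm{id}]. \]
   Context: $[p]=\{1,\dots,p\}$. $M(m,k)$ is the set of tuples $\mathbf T=(T_1,\dots,T_m)$ with each $T_i=(T_{i,1},\dots,T_{i,k})\in[km]^k$ having pairwise distinct entries; $\mathrm{Range}(\mathbf T)=\{T_{i,j}\}$ and $|\mathbf T|=|\mathrm{Range}(\mathbf T)|$. For a permutation $\sigma$ of $\mathrm{Range}(\mathbf T)$, the $(\mathbf T,\sigma)$-graph has vertex set $\{(i,j):i\in[m],j\in[k]\}$, with a black edge between $(i,j)$ and $(i,j+1)$ ($j\le k-1$), a solid red edge between distinct $(i,j),(i',j')$ with $T_{i,j}=T_{i',j'}$, and a dotted red edge between $(i,j),(i',j')$ with $T_{i,j}\neq T_{i',j'}$ and $\sigma(T_{i,j})=T_{i',j'}$ or $\sigma(T_{i',j'})=T_{i,j}$. *)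

theory Defs
  imports "HOL-Combinatorics.Permutations"
begin

text \<open>A tuple T = (T_1,...,T_m) with T_i = (T_{i,1},...,T_{i,k}) is encoded as a function
  T :: nat => nat => nat, with T i j = T_{i,j} for i in {1..m}, j in {1..k}.\<close>

definition inM :: "nat \<Rightarrow> nat \<Rightarrow> (nat \<Rightarrow> nat \<Rightarrow> nat) \<Rightarrow> bool" where
  "inM m k T \<longleftrightarrow>
     (\<forall>i\<in>{1..m}. (\<forall>j\<in>{1..k}. T i j \<in> {1..k*m}) \<and> inj_on (T i) {1..k})"

definition RangeT :: "nat \<Rightarrow> nat \<Rightarrow> (nat \<Rightarrow> nat \<Rightarrow> nat) \<Rightarrow> nat set" where
  "RangeT m k T = {T i j | i j. i \<in> {1..m} \<and> j \<in> {1..k}}"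

definition vertsT :: "nat \<Rightarrow> nat \<Rightarrow> (nat \<times> nat) set" where
  "vertsT m k = {1..m} \<times> {1..k}"

text \<open>Edges of the (T,sigma)-graph (black, solid red, dotted red), as a symmetric relation.\<close>
definition edgesT :: "nat \<Rightarrow> nat \<Rightarrow> (nat \<Rightarrow> nat \<Rightarrow> nat) \<Rightarrow> (nat \<Rightarrow> nat)
    \<Rightarrow> ((nat \<times> nat) \<times> (nat \<times> nat)) set" where
  "edgesT m k T \<sigma> = {((i,j),(i',j')). (i,j) \<in> vertsT m k \<and> (i',j') \<in> vertsT m k \<and>
      ( (i' = i \<and> (j' = j + 1 \<or> j = j' + 1))
      \<or> ((i,j) \<noteq> (i',j') \<and> T i j = T i' j')
      \<or> (T i j \<noteq> T i' j' \<and> (\<sigma> (T i j) = T i' j' \<or> \<sigma> (T i' j') = T i j)))}"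

definition graph_connected :: "nat \<Rightarrow> nat \<Rightarrow> (nat \<Rightarrow> nat \<Rightarrow> nat) \<Rightarrow> (nat \<Rightarrow> nat) \<Rightarrow> bool" where
  "graph_connected m k T \<sigma> \<longleftrightarrow>
     (\<forall>u\<in>vertsT m k. \<forall>v\<in>vertsT m k. (u, v) \<in> (edgesT m k T \<sigma>)\<^sup>*)"

definition a_count :: "nat \<Rightarrow> nat \<Rightarrow> (nat \<Rightarrow> nat \<Rightarrow> nat) \<Rightarrow> (nat \<Rightarrow> nat) \<Rightarrow> nat" where
  "a_count m k T \<sigma> = card {q \<in> RangeT m k T. \<sigma> q \<noteq> q}"

end

theory Submission
  imports Defs
begin

text \<open>Contract every row of the (T,\<sigma>)-graph, which is a black path, to a single vertex
  and identify all vertices carrying the same label. The result is a connected multigraph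
  whose vertices are the m rows and the |T| labels, with an edge from row i to each of its k
  labels and an edge from each label q with \<sigma> q \<noteq> q to \<sigma> q. A connected multigraph has at
  most one vertex more than it has edges, so m + |T| \<le> km + a(\<sigma>) + 1. If \<sigma> \<noteq> id, any label
  moved by \<sigma> lies on a cycle of \<sigma>; its \<sigma>-edge closes a cycle of the multigraph and can be
  dropped without disconnecting it, which improves the bound by one.\<close>

lemma rtrancl_map:
  assumes "(x, y) \<in> R\<^sup>*" and "map_prod f f ` R \<subseteq> S"
  shows "(f x, f y) \<in> S\<^sup>*"
  using assms by (induction rule: rtrancl_induct) (auto intro: rtrancl_into_rtrancl)

definition adjacency :: "'e set \<Rightarrow> ('e \<Rightarrow> 'v \<times> 'v) \<Rightarrow> ('v \<times> 'v) set" where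
  "adjacency E ends = {(x, y). \<exists>e\<in>E. ends e = (x, y) \<or> ends e = (y, x)}"

lemma adjacency_mono: "E \<subseteq> F \<Longrightarrow> adjacency E ends \<subseteq> adjacency F ends"
  unfolding adjacency_def by auto

lemma ends_in_adjacency: "e \<in> E \<Longrightarrow> ends e \<in> adjacency E ends"
  unfolding adjacency_def by (cases "ends e") auto

lemma reachable_adjacency_sym:
  "(x, y) \<in> (adjacency E ends)\<^sup>* \<Longrightarrow> (y, x) \<in> (adjacency E ends)\<^sup>*"
proof -
  have "sym (adjacency E ends)" unfolding adjacency_def sym_def by auto
  then show "(x, y) \<in> (adjacency E ends)\<^sup>* \<Longrightarrow> (y, x) \<in> (adjacency E ends)\<^sup>*"
    using sym_rtrancl symD by metis
qed

lemma shortest_path_last_edge: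
  assumes "(r, v) \<in> R\<^sup>*" and "v \<noteq> r"
  obtains u where "(u, v) \<in> R" and "(LEAST n. (r, u) \<in> R ^^ n) < (LEAST n. (r, v) \<in> R ^^ n)"
proof -
  define d where "d w = (LEAST n. (r, w) \<in> R ^^ n)" for w
  have "(r, v) \<in> R ^^ d v"
    using assms(1) unfolding d_def rtrancl_power by (metis LeastI)
  moreover have "d v \<noteq> 0" using calculation assms(2) by (metis relpow_0_E)
  ultimately obtain n u where "d v = Suc n" "(r, u) \<in> R ^^ n" "(u, v) \<in> R"
    by (metis not0_implies_Suc relpow_Suc_E)
  moreover have "d u \<le> n" unfolding d_def using calculation(2) by (rule Least_le)
  ultimately show thesis using that unfolding d_def by fastforce
qed

text \<open>Send each vertex other than the root to the last edge of a shortest path reaching it;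
  the endpoint nearer the root determines the edge, so this map is injective.\<close>
lemma card_connected_le_Suc_card_edges:
  assumes "finite E" and "r \<in> V" and reach: "\<And>v. v \<in> V \<Longrightarrow> (r, v) \<in> (adjacency E ends)\<^sup>*"
  shows "card V \<le> Suc (card E)"
proof -
  define d where "d w = (LEAST n. (r, w) \<in> (adjacency E ends) ^^ n)" for w
  have "\<exists>e\<in>E. \<exists>u. (ends e = (u, v) \<or> ends e = (v, u)) \<and> d u < d v" if "v \<in> V - {r}" for v
  proof -
    from that reach have "(r, v) \<in> (adjacency E ends)\<^sup>*" "v \<noteq> r" by auto
    then obtain u where "(u, v) \<in> adjacency E ends" "d u < d v"
      unfolding d_def by (rule shortest_path_last_edge)
    then show ?thesis unfolding adjacency_def by blast
  qed
  then obtain pred where pred: "\<And>v. v \<in> V - {r} \<Longrightarrow> pred v \<in> E \<and>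
      (\<exists>u. (ends (pred v) = (u, v) \<or> ends (pred v) = (v, u)) \<and> d u < d v)"
    by metis
  have "inj_on pred (V - {r})"
  proof (rule inj_onI)
    fix v w assume "v \<in> V - {r}" "w \<in> V - {r}" "pred v = pred w"
    from pred[of v] \<open>v \<in> V - {r}\<close> obtain u where
      u: "ends (pred v) = (u, v) \<or> ends (pred v) = (v, u)" "d u < d v" by blast
    from pred[of w] \<open>w \<in> V - {r}\<close> \<open>pred v = pred w\<close> obtain u' where
      "ends (pred v) = (u', w) \<or> ends (pred v) = (w, u')" "d u' < d w" by auto
    with u show "v = w" by auto
  qed
  moreover have "pred ` (V - {r}) \<subseteq> E" using pred by blast
  ultimately have "card (V - {r}) \<le> card E" using assms(1) by (rule card_inj_on_le)
  then show ?thesis using assms(2) by (cases "finite V") (auto simp: card_Diff_singleton)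
qed

lemma reachable_without_redundant_edge:
  assumes "e \<in> E" and redundant: "ends e \<in> (adjacency (E - {e}) ends)\<^sup>*"
  shows "(adjacency E ends)\<^sup>* = (adjacency (E - {e}) ends)\<^sup>*"
proof
  obtain x y where xy: "ends e = (x, y)" by fastforce
  have "adjacency E ends \<subseteq> adjacency (E - {e}) ends \<union> {(x, y), (y, x)}"
    using xy unfolding adjacency_def by auto
  also have "\<dots> \<subseteq> (adjacency (E - {e}) ends)\<^sup>*"
    using redundant reachable_adjacency_sym[of x y] xy by auto
  finally show "(adjacency E ends)\<^sup>* \<subseteq> (adjacency (E - {e}) ends)\<^sup>*"
    by (rule rtrancl_subset_rtrancl)
  show "(adjacency (E - {e}) ends)\<^sup>* \<subseteq> (adjacency E ends)\<^sup>*"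
    by (intro rtrancl_mono adjacency_mono) blast
qed

lemma card_connected_le_card_edges:
  assumes "finite E" and "r \<in> V" and reach: "\<And>v. v \<in> V \<Longrightarrow> (r, v) \<in> (adjacency E ends)\<^sup>*"
    and "e \<in> E" and "ends e \<in> (adjacency (E - {e}) ends)\<^sup>*"
  shows "card V \<le> card E"
proof -
  have "card V \<le> Suc (card (E - {e}))"
    using assms(1,2) reach reachable_without_redundant_edge[OF assms(4,5)]
    by (intro card_connected_le_Suc_card_edges) auto
  moreover have "card E > 0" using assms(1,4) card_gt_0_iff by blast
  ultimately show ?thesis using assms(1,4) by (simp add: card_Diff_singleton)
qed

lemma permutes_cycle_path:
  assumes "f permutes S" and "finite S"
  shows "(f q, q) \<in> {(x, f x) | x. x \<in> S \<and> x \<noteq> q \<and> f x \<noteq> x}\<^sup>*"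
    (is "_ \<in> ?R\<^sup>*")
proof -
  have "permutation f" using assms permutation_permutes by blast
  then obtain n where "n > 0" "(f ^^ n) q = q" by (rule permutation_self)
  then obtain n where n: "0 < n" "(f ^^ n) q = q"
    and min: "\<And>i. 0 < i \<Longrightarrow> i < n \<Longrightarrow> (f ^^ i) q \<noteq> q"
    using exists_least_iff[of "\<lambda>n. 0 < n \<and> (f ^^ n) q = q"] by (metis (no_types, lifting))
  have "(f q, (f ^^ Suc i) q) \<in> ?R\<^sup>*" if "Suc i \<le> n" for i
    using that
  proof (induction i)
    case 0
    show ?case by simp
  next
    case (Suc i)
    define x where "x = (f ^^ Suc i) q"
    have "x \<noteq> q" using min[of "Suc i"] Suc.prems by (simp add: x_def)
    then have "(x, f x) \<in> ?R\<^sup>*"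
      using permutes_not_in[OF assms(1), of x] by (cases "f x = x") auto
    with Suc show ?case by (simp add: x_def)
  qed
  from this[of "n - 1"] n show ?thesis by simp
qed

text \<open>Rows are tagged Inl and labels Inr. The edge Inl (i, j) joins row i to its entry T i j;
  the edge Inr q joins q to \<sigma> q.\<close>

definition contracted_vertices :: "nat \<Rightarrow> nat \<Rightarrow> (nat \<Rightarrow> nat \<Rightarrow> nat) \<Rightarrow> (nat + nat) set" where
  "contracted_vertices m k T = Inl ` {1..m} \<union> Inr ` RangeT m k T"

definition contracted_edges :: "nat \<Rightarrow> nat \<Rightarrow> (nat \<Rightarrow> nat \<Rightarrow> nat) \<Rightarrow> (nat \<Rightarrow> nat)
    \<Rightarrow> ((nat \<times> nat) + nat) set" where
  "contracted_edges m k T \<sigma> = Inl ` vertsT m k \<union> Inr ` {q \<in> RangeT m k T. \<sigma> q \<noteq> q}"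

definition contracted_ends :: "(nat \<Rightarrow> nat \<Rightarrow> nat) \<Rightarrow> (nat \<Rightarrow> nat)
    \<Rightarrow> (nat \<times> nat) + nat \<Rightarrow> (nat + nat) \<times> (nat + nat)" where
  "contracted_ends T \<sigma> = case_sum (\<lambda>(i, j). (Inl i, Inr (T i j))) (\<lambda>q. (Inr q, Inr (\<sigma> q)))"

abbreviation contracted_adjacency :: "nat \<Rightarrow> nat \<Rightarrow> (nat \<Rightarrow> nat \<Rightarrow> nat) \<Rightarrow> (nat \<Rightarrow> nat)
    \<Rightarrow> ((nat + nat) \<times> (nat + nat)) set" where
  "contracted_adjacency m k T \<sigma> \<equiv> adjacency (contracted_edges m k T \<sigma>) (contracted_ends T \<sigma>)"

lemma finite_RangeT: "finite (RangeT m k T)"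
proof -
  have "RangeT m k T = (\<lambda>(i, j). T i j) ` ({1..m} \<times> {1..k})"
    unfolding RangeT_def by force
  then show ?thesis by simp
qed

lemma card_contracted_vertices: "card (contracted_vertices m k T) = m + card (RangeT m k T)"
  unfolding contracted_vertices_def
  by (subst card_Un_disjoint) (auto simp: card_image finite_RangeT)

lemma card_contracted_edges: "card (contracted_edges m k T \<sigma>) = k * m + a_count m k T \<sigma>"
  unfolding contracted_edges_def a_count_def vertsT_def
  by (subst card_Un_disjoint) (auto simp: card_image finite_RangeT card_cartesian_product)

lemma row_label_adjacent:
  "(i, j) \<in> vertsT m k \<Longrightarrow> (Inl i, Inr (T i j)) \<in> contracted_adjacency m k T \<sigma>"
  using ends_in_adjacency[of "Inl (i, j)" "contracted_edges m k T \<sigma>" "contracted_ends T \<sigma>"]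
  unfolding contracted_edges_def contracted_ends_def by simp

lemma label_reaches_image:
  assumes "q \<in> RangeT m k T"
  shows "(Inr q, Inr (\<sigma> q)) \<in> (contracted_adjacency m k T \<sigma>)\<^sup>*"
proof (cases "\<sigma> q = q")
  case False
  then have "Inr q \<in> contracted_edges m k T \<sigma>"
    using assms unfolding contracted_edges_def by simp
  then have "contracted_ends T \<sigma> (Inr q) \<in> contracted_adjacency m k T \<sigma>"
    by (rule ends_in_adjacency)
  then show ?thesis by (simp add: contracted_ends_def r_into_rtrancl)
qed simp

lemma edgesT_rows_reachable:
  assumes "((i, j), (i', j')) \<in> edgesT m k T \<sigma>"
  shows "(Inl i, Inl i') \<in> (contracted_adjacency m k T \<sigma>)\<^sup>*"
proof (cases "i' = i")
  case False
  let ?R = "(contracted_adjacency m k T \<sigma>)\<^sup>*"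
  from assms have v: "(i, j) \<in> vertsT m k" "(i', j') \<in> vertsT m k"
    unfolding edgesT_def by auto
  then have labels: "T i j \<in> RangeT m k T" "T i' j' \<in> RangeT m k T"
    unfolding vertsT_def RangeT_def by auto
  from assms False have "T i j = T i' j' \<or> \<sigma> (T i j) = T i' j' \<or> \<sigma> (T i' j') = T i j"
    unfolding edgesT_def by auto
  moreover note label_reaches_image[OF labels(1), of \<sigma>]
    label_reaches_image[OF labels(2), of \<sigma>]
  ultimately have "(Inr (T i j), Inr (T i' j')) \<in> ?R"
    by (auto intro: reachable_adjacency_sym)
  moreover have "(Inl i, Inr (T i j)) \<in> ?R" "(Inr (T i' j'), Inl i') \<in> ?R"
    using row_label_adjacent[OF v(1), of T \<sigma>]
      reachable_adjacency_sym[OF r_into_rtrancl[OF row_label_adjacent[OF v(2), of T \<sigma>]]]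
    by auto
  ultimately show ?thesis by (meson rtrancl_trans)
qed simp

lemma contracted_graph_connected:
  assumes "1 \<le> m" and "1 \<le> k" and "graph_connected m k T \<sigma>"
    and "v \<in> contracted_vertices m k T"
  shows "(Inl 1, v) \<in> (contracted_adjacency m k T \<sigma>)\<^sup>*"
proof -
  let ?R = "(contracted_adjacency m k T \<sigma>)\<^sup>*"
  have rows: "(Inl 1, Inl i) \<in> ?R" if "i \<in> {1..m}" for i
  proof -
    have path: "((1, 1), (i, 1)) \<in> (edgesT m k T \<sigma>)\<^sup>*"
      using assms(1-3) that unfolding graph_connected_def vertsT_def by auto
    have "map_prod (Inl \<circ> fst) (Inl \<circ> fst) ` edgesT m k T \<sigma> \<subseteq> ?R"
      using edgesT_rows_reachable by fastforce
    from rtrancl_map[OF path this] show ?thesis by simp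
  qed
  from assms(4) consider i where "i \<in> {1..m}" "v = Inl i"
    | i j where "(i, j) \<in> vertsT m k" "v = Inr (T i j)"
    unfolding contracted_vertices_def RangeT_def vertsT_def by auto
  then show ?thesis
  proof cases
    case (2 i j)
    then have "i \<in> {1..m}" unfolding vertsT_def by auto
    with 2 rows row_label_adjacent show ?thesis by (meson rtrancl_into_rtrancl)
  qed (use rows in simp)
qed

lemma moved_label_edge_redundant:
  assumes "\<sigma> permutes RangeT m k T" and "\<sigma> q \<noteq> q"
  shows "contracted_ends T \<sigma> (Inr q)
    \<in> (adjacency (contracted_edges m k T \<sigma> - {Inr q}) (contracted_ends T \<sigma>))\<^sup>*"
proof -
  let ?S = "adjacency (contracted_edges m k T \<sigma> - {Inr q}) (contracted_ends T \<sigma>)"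
  have "(\<sigma> q, q) \<in> {(x, \<sigma> x) | x. x \<in> RangeT m k T \<and> x \<noteq> q \<and> \<sigma> x \<noteq> x}\<^sup>*"
    using assms(1) finite_RangeT by (rule permutes_cycle_path)
  moreover have
    "map_prod Inr Inr ` {(x, \<sigma> x) | x. x \<in> RangeT m k T \<and> x \<noteq> q \<and> \<sigma> x \<noteq> x} \<subseteq> ?S"
    unfolding adjacency_def contracted_edges_def contracted_ends_def by force
  ultimately have "(Inr (\<sigma> q), Inr q) \<in> ?S\<^sup>*" by (rule rtrancl_map)
  then show ?thesis
    using reachable_adjacency_sym by (simp add: contracted_ends_def)
qed

theorem mainTheorem7:
  fixes m k :: nat and T :: "nat \<Rightarrow> nat \<Rightarrow> nat" and \<sigma> :: "nat \<Rightarrow> nat"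
  assumes "m \<ge> 1" and "k \<ge> 1"
    and "inM m k T"
    and "\<sigma> permutes RangeT m k T"
    and "graph_connected m k T \<sigma>"
  shows "int (k * m) - int (card (RangeT m k T)) + int (a_count m k T \<sigma>)
           \<ge> int m - 1 + (if \<sigma> \<noteq> id then 1 else 0)"
proof -
  let ?V = "contracted_vertices m k T" and ?E = "contracted_edges m k T \<sigma>"
  have root: "Inl 1 \<in> ?V" using assms(1) unfolding contracted_vertices_def by simp
  have reach: "(Inl 1, v) \<in> (contracted_adjacency m k T \<sigma>)\<^sup>*" if "v \<in> ?V" for v
    using contracted_graph_connected[OF assms(1,2,5) that] .
  have finE: "finite ?E" unfolding contracted_edges_def vertsT_def by (simp add: finite_RangeT)
  have "card ?V \<le> card ?E + (if \<sigma> \<noteq> id then 0 else 1)"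
  proof (cases "\<sigma> = id")
    case True
    show ?thesis using card_connected_le_Suc_card_edges[OF finE root reach] True by simp
  next
    case False
    then obtain q where q: "\<sigma> q \<noteq> q" by (metis eq_id_iff)
    then have "q \<in> RangeT m k T" using assms(4) permutes_not_in by metis
    with q have "Inr q \<in> ?E" unfolding contracted_edges_def by simp
    from card_connected_le_card_edges[OF finE root reach this
        moved_label_edge_redundant[OF assms(4) q]]
    show ?thesis using False by simp
  qed
  then show ?thesis
    using card_contracted_vertices[of m k T] card_contracted_edges[of m k T \<sigma>]
    by (cases "\<sigma> = id") (simp_all del: of_nat_mult)
qed

end
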